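(* Any $1$-consistent algorithm for the $\{0,1\}$-speed SSP problem has robustness at least $\frac{2(m-1)}{m}$, where $m$ is the total number of machines.
   Context: $\{0,1\}$-speed SSP: there are $n$ jobs with processing times $p_1,\dots,p_n\ge0$ and $m$ machines, each of speed $0$ (unavailable) or $1$ (available). In the partitioning stage the algorithm knows $\mathbf p$, $m$ and a prediction $\hat m$ of the number of available machines, and partitions the jobs into $m$ possibly empty bags. In the scheduling stage the actual number $m_0\ge1$ of available machines is revealed and each bag is assigned whole to one of the $m_0$ identical unit-speed machines; the makespan is the maximum total processing time on a machine. $opt(\mathbf p,x)$ is the minimum makespan of scheduling the individual jobs on $x$ identical unit-speed machines; $alg(\mathbf p,\hat m,m_0)$ is the algorithm's makespan. An algorithm is $1$-consistent if $alg(\mathbf p,m_0,m_0)\le opt(\mathbf p,m_0)$ for all $\mathbf p,m_0$; its robustness is $\sup_{\mathbf p,\hat m,m_0} alg(\mathbf p,\hat m,m_0)/opt(\mathbf p,m_0)$. *)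

theory Defs
  imports "HOL-Library.Extended_Real" Complex_Main
begin

text \<open>Jobs are given as a list p of processing times (job j has time p!j, j < length p).
  An assignment of jobs to x machines is a function f with f j < x for all jobs j.\<close>

definition load :: "real list \<Rightarrow> (nat \<Rightarrow> nat) \<Rightarrow> nat \<Rightarrow> real" where
  "load p f i = (\<Sum>j<length p. if f j = i then p ! j else 0)"

definition makespan :: "real list \<Rightarrow> nat \<Rightarrow> (nat \<Rightarrow> nat) \<Rightarrow> real" where
  "makespan p x f = Max (load p f ` {..<x})"

definition opt :: "real list \<Rightarrow> nat \<Rightarrow> real" where
  "opt p x = Min {makespan p x f | f. \<forall>j<length p. f j < x}"

text \<open>An algorithm for {0,1}-speed SSP with m machines is a pair (A, S):
  A p mh j is the bag (in {0..<m}) of job j, given the jobs p and the prediction mh;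
  S p mh m0 b is the machine (in {0..<m0}) to which bag b is assigned once m0 is revealed.\<close>
definition valid_alg ::
  "nat \<Rightarrow> (real list \<Rightarrow> nat \<Rightarrow> nat \<Rightarrow> nat) \<Rightarrow> (real list \<Rightarrow> nat \<Rightarrow> nat \<Rightarrow> nat \<Rightarrow> nat) \<Rightarrow> bool" where
  "valid_alg m A S \<longleftrightarrow>
     (\<forall>p mh. (\<forall>x\<in>set p. x \<ge> 0) \<and> mh \<in> {1..m} \<longrightarrow>
        (\<forall>j<length p. A p mh j < m) \<and>
        (\<forall>m0\<in>{1..m}. \<forall>b<m. S p mh m0 b < m0))"

definition alg ::
  "(real list \<Rightarrow> nat \<Rightarrow> nat \<Rightarrow> nat) \<Rightarrow> (real list \<Rightarrow> nat \<Rightarrow> nat \<Rightarrow> nat \<Rightarrow> nat) \<Rightarrow>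
   real list \<Rightarrow> nat \<Rightarrow> nat \<Rightarrow> real" where
  "alg A S p mh m0 = makespan p m0 (\<lambda>j. S p mh m0 (A p mh j))"

definition one_consistent ::
  "nat \<Rightarrow> (real list \<Rightarrow> nat \<Rightarrow> nat \<Rightarrow> nat) \<Rightarrow> (real list \<Rightarrow> nat \<Rightarrow> nat \<Rightarrow> nat \<Rightarrow> nat) \<Rightarrow> bool" where
  "one_consistent m A S \<longleftrightarrow>
     (\<forall>p m0. (\<forall>x\<in>set p. x \<ge> 0) \<and> m0 \<in> {1..m} \<longrightarrow> alg A S p m0 m0 \<le> opt p m0)"

text \<open>Robustness: sup of alg/opt over all instances (the only instances with opt = 0 are
  all-zero ones, where alg = 0 as well; there the ratio is 0 by the HOL convention x/0 = 0).\<close>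
definition robustness ::
  "nat \<Rightarrow> (real list \<Rightarrow> nat \<Rightarrow> nat \<Rightarrow> nat) \<Rightarrow> (real list \<Rightarrow> nat \<Rightarrow> nat \<Rightarrow> nat \<Rightarrow> nat) \<Rightarrow> ereal" where
  "robustness m A S =
     (SUP (p, mh, m0) \<in> {(p, mh, m0). (\<forall>x\<in>set p. x \<ge> 0) \<and> mh \<in> {1..m} \<and> m0 \<in> {1..m}}.
        ereal (alg A S p mh m0 / opt p m0))"

end

theory Submission
  imports Defs "HOL-Library.FuncSet"
begin

text \<open>Take m(m-1) unit jobs. With prediction and reality both m the optimum is m-1, so a
  1-consistent algorithm must put exactly m-1 jobs into each of its m bags. If then only m-1
  machines turn up, two bags share a machine, giving makespan 2(m-1), whereas the jobs
  themselves fit on m-1 machines with makespan m.\<close>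

lemma load_nonneg: "\<forall>x\<in>set p. x \<ge> 0 \<Longrightarrow> 0 \<le> load p f i"
  unfolding load_def by (intro sum_nonneg) auto

lemma sum_load_eq_sum_list:
  assumes "\<forall>j<length p. f j < x"
  shows "(\<Sum>i<x. load p f i) = sum_list p"
proof -
  have "(\<Sum>i<x. load p f i) = (\<Sum>j<length p. \<Sum>i<x. if f j = i then p ! j else 0)"
    unfolding load_def by (rule sum.swap)
  also have "\<dots> = (\<Sum>j<length p. p ! j)"
    using assms by (intro sum.cong) auto
  finally show ?thesis
    by (simp add: sum_list_sum_nth atLeast0LessThan)
qed

lemma sum_load_le_load_comp:
  assumes "\<forall>x\<in>set p. x \<ge> 0" "finite B" "\<forall>b\<in>B. g b = i"
  shows "(\<Sum>b\<in>B. load p f b) \<le> load p (\<lambda>j. g (f j)) i"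
proof -
  have "(\<Sum>b\<in>B. load p f b) = (\<Sum>j<length p. \<Sum>b\<in>B. if f j = b then p ! j else 0)"
    unfolding load_def by (rule sum.swap)
  also have "\<dots> = (\<Sum>j<length p. if f j \<in> B then p ! j else 0)"
    using assms(2) by (intro sum.cong) (auto simp: sum.delta)
  also have "\<dots> \<le> load p (\<lambda>j. g (f j)) i"
    unfolding load_def using assms(1,3) by (intro sum_mono) auto
  finally show ?thesis .
qed

lemma load_le_makespan: "i < x \<Longrightarrow> load p f i \<le> makespan p x f"
  unfolding makespan_def by (intro Max_ge) auto

lemma makespan_leI: "x \<ge> 1 \<Longrightarrow> (\<And>i. i < x \<Longrightarrow> load p f i \<le> c) \<Longrightarrow> makespan p x f \<le> c"
  unfolding makespan_def by (subst Max_le_iff) (auto simp: lessThan_empty_iff)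

lemma makespan_nonneg: "\<forall>y\<in>set p. y \<ge> 0 \<Longrightarrow> x \<ge> 1 \<Longrightarrow> 0 \<le> makespan p x f"
  using load_le_makespan[of 0 x p f] load_nonneg[of p f 0] by simp

lemma finite_makespans: "finite {makespan p x f | f. \<forall>j<length p. f j < x}"
proof -
  have "{makespan p x f | f. \<forall>j<length p. f j < x} \<subseteq>
        makespan p x ` ({..<length p} \<rightarrow>\<^sub>E {..<x})"
  proof
    fix y assume "y \<in> {makespan p x f | f. \<forall>j<length p. f j < x}"
    then obtain f where f: "\<forall>j<length p. f j < x" "y = makespan p x f" by auto
    have "load p f = load p (restrict f {..<length p})"
      unfolding load_def by (intro ext sum.cong) auto
    then have "y = makespan p x (restrict f {..<length p})"
      using f unfolding makespan_def by simp
    moreover have "restrict f {..<length p} \<in> {..<length p} \<rightarrow>\<^sub>E {..<x}" using f by auto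
    ultimately show "y \<in> makespan p x ` ({..<length p} \<rightarrow>\<^sub>E {..<x})" by blast
  qed
  then show ?thesis by (rule finite_subset) (intro finite_imageI finite_PiE; simp)
qed

lemma opt_le_makespan: "\<forall>j<length p. f j < x \<Longrightarrow> opt p x \<le> makespan p x f"
  unfolding opt_def by (intro Min_le finite_makespans) auto

lemma opt_attained:
  assumes "x \<ge> 1"
  obtains f where "\<forall>j<length p. f j < x" "opt p x = makespan p x f"
proof -
  have "makespan p x (\<lambda>_. 0) \<in> {makespan p x f | f. \<forall>j<length p. f j < x}"
    using assms by auto
  then have "{makespan p x f | f. \<forall>j<length p. f j < x} \<noteq> {}"
    by blast
  then have "opt p x \<in> {makespan p x f | f. \<forall>j<length p. f j < x}"
    unfolding opt_def by (rule Min_in[OF finite_makespans])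
  then show ?thesis using that by auto
qed

lemma nth_le_load:
  assumes "\<forall>y\<in>set p. y \<ge> 0" "j < length p"
  shows "p ! j \<le> load p f (f j)"
proof -
  have "p ! j = (if f j = f j then p ! j else 0)" by simp
  also have "\<dots> \<le> load p f (f j)"
    unfolding load_def using assms by (intro member_le_sum) auto
  finally show ?thesis .
qed

lemma nth_le_opt:
  assumes "\<forall>y\<in>set p. y \<ge> 0" "x \<ge> 1" "j < length p"
  shows "p ! j \<le> opt p x"
proof -
  obtain f where f: "\<forall>j<length p. f j < x" "opt p x = makespan p x f"
    using opt_attained[OF assms(2)] .
  show ?thesis
    using nth_le_load[OF assms(1,3), of f] load_le_makespan[of "f j" x p f] f assms(3)
    by simp
qed

lemma opt_nonneg: "\<forall>y\<in>set p. y \<ge> 0 \<Longrightarrow> x \<ge> 1 \<Longrightarrow> 0 \<le> opt p x"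
  by (metis opt_attained makespan_nonneg)

lemma load_replicate_one: "load (replicate n 1) f i = real (card {j. j < n \<and> f j = i})"
proof -
  have "load (replicate n 1) f i = (\<Sum>j<n. if f j = i then 1 else 0)"
    unfolding load_def by (intro sum.cong) auto
  also have "\<dots> = real (card {j. j < n \<and> f j = i})"
    by (simp add: sum.If_cases lessThan_def Collect_conj_eq)
  finally show ?thesis .
qed

lemma opt_replicate_one_le:
  assumes "k > 0" "x \<ge> 1" "n \<le> x * k"
  shows "opt (replicate n 1) x \<le> real k"
proof -
  have "opt (replicate n 1) x \<le> makespan (replicate n 1) x (\<lambda>j. j div k)"
    using assms by (intro opt_le_makespan) (auto simp: less_mult_imp_div_less)
  also have "\<dots> \<le> real k"
  proof (rule makespan_leI[OF assms(2)])
    fix i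
    have "{j. j < n \<and> j div k = i} \<subseteq> {i * k..<i * k + k}"
      using dividend_less_div_times[OF assms(1)] by (auto simp: add.commute)
    then have "card {j. j < n \<and> j div k = i} \<le> k"
      using card_mono[of "{i * k..<i * k + k}"] by fastforce
    then show "load (replicate n 1) (\<lambda>j. j div k) i \<le> real k"
      by (simp add: load_replicate_one)
  qed
  finally show ?thesis .
qed

lemma ratio_le_robustness:
  assumes "\<forall>y\<in>set p. y \<ge> 0" "mh \<in> {1..m}" "m0 \<in> {1..m}"
  shows "ereal (alg A S p mh m0 / opt p m0) \<le> robustness m A S"
  unfolding robustness_def using assms by (intro SUP_upper2[of "(p, mh, m0)"]) auto

lemma robustness_nonneg:
  assumes "m \<ge> 1"
  shows "0 \<le> robustness m A S"
proof -
  have "0 \<le> alg A S [] 1 1 / opt [] 1"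
    unfolding alg_def by (intro divide_nonneg_nonneg makespan_nonneg opt_nonneg) auto
  then have "0 \<le> ereal (alg A S [] 1 1 / opt [] 1)"
    by simp
  also have "\<dots> \<le> robustness m A S"
    using assms by (intro ratio_le_robustness) auto
  finally show ?thesis .
qed

lemma consistent_bags_balanced:
  assumes "valid_alg m A S" "one_consistent m A S" "m \<ge> 1" "k > 0" "b < m"
  defines "p \<equiv> replicate (m * k) 1"
  shows "load p (A p m) b = real k"
proof -
  have p_nonneg: "\<forall>y\<in>set p. y \<ge> 0" unfolding p_def by simp
  have bags: "\<forall>j<length p. A p m j < m" and machines: "\<forall>b<m. S p m m b < m"
    using assms(1,3) p_nonneg unfolding valid_alg_def by auto
  have bag_le: "load p (A p m) b' \<le> real k" if "b' < m" for b'
  proof -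
    have "load p (A p m) b' \<le> load p (\<lambda>j. S p m m (A p m j)) (S p m m b')"
      using sum_load_le_load_comp[of p "{b'}" "S p m m"] p_nonneg by simp
    also have "\<dots> \<le> alg A S p m m"
      unfolding alg_def using machines that by (intro load_le_makespan) auto
    also have "\<dots> \<le> opt p m"
      using assms(2,3) p_nonneg unfolding one_consistent_def by auto
    also have "\<dots> \<le> real k"
      unfolding p_def using assms(3,4) by (intro opt_replicate_one_le) auto
    finally show ?thesis .
  qed
  have "(\<Sum>b'<m. real k - load p (A p m) b') = real m * real k - sum_list p"
    using sum_load_eq_sum_list[OF bags] by (simp add: sum_subtractf)
  also have "\<dots> = 0"
    unfolding p_def by (simp add: sum_list_replicate)
  finally have "\<forall>b'<m. real k - load p (A p m) b' = 0"
    using bag_le by (subst (asm) sum_nonneg_eq_0_iff) auto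
  then show ?thesis using assms(5) by simp
qed

lemma two_loads_le_makespan_comp:
  assumes "\<forall>y\<in>set p. y \<ge> 0" "\<forall>b<m. g b < x" "x < m"
  obtains b1 b2 where "b1 < m" "b2 < m" "b1 \<noteq> b2"
    "load p f b1 + load p f b2 \<le> makespan p x (\<lambda>j. g (f j))"
proof -
  have "g ` {..<m} \<subseteq> {..<x}" using assms(2) by auto
  then have "\<not> inj_on g {..<m}"
    using card_inj_on_le[of g "{..<m}" "{..<x}"] assms(3) by auto
  then obtain b1 b2 where b: "b1 < m" "b2 < m" "b1 \<noteq> b2" "g b1 = g b2"
    unfolding inj_on_def by auto
  have "load p f b1 + load p f b2 \<le> load p (\<lambda>j. g (f j)) (g b1)"
    using sum_load_le_load_comp[of p "{b1, b2}" g "g b1" f] assms(1) b by simp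
  also have "\<dots> \<le> makespan p x (\<lambda>j. g (f j))"
    using assms(2) b by (intro load_le_makespan) auto
  finally show ?thesis using that b by blast
qed

theorem lemma18:
  fixes m :: nat
    and A :: "real list \<Rightarrow> nat \<Rightarrow> nat \<Rightarrow> nat"
    and S :: "real list \<Rightarrow> nat \<Rightarrow> nat \<Rightarrow> nat \<Rightarrow> nat"
  assumes "m \<ge> 1"
    and "valid_alg m A S"
    and "one_consistent m A S"
  shows "robustness m A S \<ge> ereal (2 * (real m - 1) / real m)"
proof (cases "m = 1")
  case True
  then show ?thesis using robustness_nonneg[of m A S] by (simp add: zero_ereal_def)
next
  case False
  then have m: "m \<ge> 2" using assms(1) by simp
  define p where "p = replicate (m * (m - 1)) (1::real)"
  have p_nonneg: "\<forall>y\<in>set p. y \<ge> 0" unfolding p_def by simp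
  have bags: "\<forall>b<m. load p (A p m) b = real (m - 1)"
    using consistent_bags_balanced[OF assms(2,3,1)] m unfolding p_def by simp
  have "\<forall>b<m. S p m (m - 1) b < m - 1"
    using assms(2) p_nonneg m unfolding valid_alg_def by auto
  moreover have "m - 1 < m" using m by simp
  ultimately obtain b1 b2 where "b1 < m" "b2 < m"
    "load p (A p m) b1 + load p (A p m) b2 \<le> alg A S p m (m - 1)"
    unfolding alg_def by (rule two_loads_le_makespan_comp[OF p_nonneg])
  then have alg_ge: "2 * (real m - 1) \<le> alg A S p m (m - 1)"
    using bags m by (simp add: of_nat_diff)
  have "opt p (m - 1) \<le> real m"
    unfolding p_def using m by (intro opt_replicate_one_le) (auto simp: mult.commute)
  moreover have "1 \<le> opt p (m - 1)"
    using nth_le_opt[OF p_nonneg, of "m - 1" 0] m unfolding p_def by simp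
  ultimately have "2 * (real m - 1) / real m \<le> alg A S p m (m - 1) / opt p (m - 1)"
    using alg_ge m by (intro frac_le) auto
  also have "ereal \<dots> \<le> robustness m A S"
    using p_nonneg m by (intro ratio_le_robustness) auto
  finally show ?thesis by simp
qed

end
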